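(* Let $P:\{-1,1\}^k\to\{0,1\}$ be a predicate and $Q:\{-1,1\}^k\to\mathbb{R}$. Then $P$ is positively information-theoretically useless for $Q$ if and only if there exists a probability measure $\mu$ on $\{-1,1\}^k$ supported on $P^{-1}(1)$ such that $\mathrm{Opt}^+(Q,\mu)=E_Q^+$.
   Context: Boolean values are encoded as $\pm1$. An instance of Max-$P^+$ (no negations) on variables $x_1,\dots,x_n$ consists of $m$ constraints, constraint $j$ given by indices $a_j^1,\dots,a_j^k\in[n]$ pairwise distinct within the constraint; for $x\in\{-1,1\}^n$ let $x_{a_j}=(x_{a_j^1},\dots,x_{a_j^k})$. For $r\in[-1,1]$, let $E_Q(r)=\mathbb{E}[Q(x)]$ where $x$ has independent coordinates each with expectation $r$ (i.e., $x_i=1$ with probability $(1+r)/2$), and $E_Q^+=\max_{r\in[-1,1]}E_Q(r)$. $P$ is positively information-theoretically useless for $Q$ if for every $\epsilon>0$ there is a Max-$P^+$ instance with $\max_x\frac1m\sum_j P(x_{a_j})=1$ and $\max_x\frac1m\sum_j Q(x_{a_j})\le E_Q^+ +\epsilon$. For a probability measure $\mu$ on $\{-1,1\}^k$ and $p,q\in[0,1]$, $\mu^{p,q}$ is obtained by sampling a string from $\mu$ and then, independently for each coordinate, changing a coordinate equal to $1$ to $-1$ with probability $p$ and a coordinate equal to $-1$ to $1$ with probability $q$. $\mathrm{Opt}^+(Q,\mu)=\max_{p,q\in[0,1]}\mathbb{E}_{x\sim\mu^{p,q}}[Q(x)]$. *)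

theory Defs
  imports "HOL-Analysis.Analysis"
begin

definition cube :: "nat \<Rightarrow> int list set" where
  "cube k = {x. length x = k \<and> set x \<subseteq> {-1, 1}}"

text \<open>A Max-P+ instance on n variables with arity k: a nonempty list of constraints,
  each a list of k pairwise distinct variable indices in [0,n).\<close>
definition valid_instance :: "nat \<Rightarrow> nat \<Rightarrow> nat list list \<Rightarrow> bool" where
  "valid_instance n k I \<longleftrightarrow> I \<noteq> [] \<and>
     (\<forall>a\<in>set I. length a = k \<and> distinct a \<and> set a \<subseteq> {..<n})"

definition inst_val :: "(int list \<Rightarrow> real) \<Rightarrow> nat list list \<Rightarrow> int list \<Rightarrow> real" where
  "inst_val f I x = (\<Sum>a\<leftarrow>I. f (map (\<lambda>i. x ! i) a)) / real (length I)"

definition inst_opt :: "(int list \<Rightarrow> real) \<Rightarrow> nat \<Rightarrow> nat list list \<Rightarrow> real" where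
  "inst_opt f n I = Max ((\<lambda>x. inst_val f I x) ` cube n)"

text \<open>E_Q(r): expectation of Q under independent coordinates with mean r.\<close>
definition E_Q :: "nat \<Rightarrow> (int list \<Rightarrow> real) \<Rightarrow> real \<Rightarrow> real" where
  "E_Q k Q r = (\<Sum>y\<in>cube k. Q y * (\<Prod>i<k. (1 + r * real_of_int (y ! i)) / 2))"

definition E_Q_plus :: "nat \<Rightarrow> (int list \<Rightarrow> real) \<Rightarrow> real" where
  "E_Q_plus k Q = (SUP r\<in>{-1..1}. E_Q k Q r)"

definition pos_it_useless :: "nat \<Rightarrow> (int list \<Rightarrow> real) \<Rightarrow> (int list \<Rightarrow> real) \<Rightarrow> bool" where
  "pos_it_useless k P Q \<longleftrightarrow>
     (\<forall>\<epsilon>>0. \<exists>n I. valid_instance n k I \<and> inst_opt P n I = 1 \<and>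
                 inst_opt Q n I \<le> E_Q_plus k Q + \<epsilon>)"

text \<open>Transition probability of a single coordinate in the noise operator:
  1 becomes -1 with prob. p, -1 becomes 1 with prob. q.\<close>
definition flip_prob :: "real \<Rightarrow> real \<Rightarrow> int \<Rightarrow> int \<Rightarrow> real" where
  "flip_prob p q a b =
     (if a = 1 then (if b = 1 then 1 - p else p)
      else (if b = 1 then q else 1 - q))"

text \<open>Expectation of Q under mu^{p,q}; mu is a probability mass function on cube k.\<close>
definition E_noisy :: "nat \<Rightarrow> (int list \<Rightarrow> real) \<Rightarrow> (int list \<Rightarrow> real) \<Rightarrow> real \<Rightarrow> real \<Rightarrow> real" where
  "E_noisy k Q \<mu> p q =
     (\<Sum>y\<in>cube k. \<mu> y * (\<Sum>z\<in>cube k. Q z * (\<Prod>i<k. flip_prob p q (y ! i) (z ! i))))"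

definition Opt_plus :: "nat \<Rightarrow> (int list \<Rightarrow> real) \<Rightarrow> (int list \<Rightarrow> real) \<Rightarrow> real" where
  "Opt_plus k Q \<mu> = (SUP pq\<in>{0..1} \<times> {0..1}. E_noisy k Q \<mu> (fst pq) (snd pq))"

definition prob_on_cube :: "nat \<Rightarrow> (int list \<Rightarrow> real) \<Rightarrow> bool" where
  "prob_on_cube k \<mu> \<longleftrightarrow> (\<forall>y. \<mu> y \<ge> 0) \<and> (\<forall>y. y \<notin> cube k \<longrightarrow> \<mu> y = 0) \<and>
      (\<Sum>y\<in>cube k. \<mu> y) = 1"

end

theory Submission
  imports Defs
begin

text \<open>
  If \<open>P\<close> is positively useless for \<open>Q\<close>, take an assignment satisfying an instance whose
  \<open>Q\<close>-optimum is at most \<open>E\<^sub>Q\<^sup>+ + \<epsilon>\<close>. The distribution of its local views on a random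
  constraint is supported on \<open>P\<inverse>(1)\<close>, and its \<open>(p, q)\<close>-noisy expectation of \<open>Q\<close> is the
  expected value of a \<open>(p, q)\<close>-noisy copy of the assignment, hence at most \<open>E\<^sub>Q\<^sup>+ + \<epsilon>\<close>.
  A limit point of these distributions as \<open>\<epsilon> \<rightarrow> 0\<close> exists by compactness of the simplex and
  has \<open>Opt\<^sup>+ \<le> E\<^sub>Q\<^sup>+\<close>; the reverse inequality holds for every distribution, since
  \<open>q = 1 - p\<close> makes the noise forget its input.

  Conversely, given \<open>\<mu>\<close>, take \<open>N\<close> positive and \<open>N\<close> negative variables and about \<open>M \<mu>(y)\<close>
  copies of every injective tuple whose \<open>i\<close>-th variable is positive iff \<open>y\<^sub>i = 1\<close>. Setting
  the positive variables to \<open>1\<close> and the negative ones to \<open>-1\<close> satisfies every constraint. An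
  arbitrary assignment, which sets a fraction \<open>p\<close> of the positive variables to \<open>-1\<close> and a
  fraction \<open>q\<close> of the negative ones to \<open>1\<close>, has \<open>Q\<close>-value the expectation of \<open>Q\<close>
  under \<open>\<mu>\<^bsup>p,q\<^esup>\<close>, which is at most \<open>Opt\<^sup>+(Q, \<mu>)\<close>, up to the rounding of \<open>M \<mu>\<close> and
  the few non-injective tuples, both negligible for large \<open>M\<close> and \<open>N\<close>.
\<close>

lemma sum_by_fibres:
  fixes w h :: "_ \<Rightarrow> real"
  assumes "finite T" "finite C" "f ` T \<subseteq> C"
  shows "(\<Sum>a\<in>T. w a * h (f a)) = (\<Sum>z\<in>C. h z * (\<Sum>a\<in>{a\<in>T. f a = z}. w a))"
proof -
  have "(\<Sum>a\<in>T. w a * h (f a)) = (\<Sum>z\<in>C. \<Sum>a\<in>{a\<in>T. f a = z}. w a * h (f a))"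
    using sum.group[OF assms, of "\<lambda>a. w a * h (f a)"] by simp
  also have "\<dots> = (\<Sum>z\<in>C. h z * (\<Sum>a\<in>{a\<in>T. f a = z}. w a))"
    by (intro sum.cong refl) (simp add: sum_distrib_left mult.commute)
  finally show ?thesis .
qed

lemma sum_list_map_eq_sum_count_list:
  fixes G :: "'a \<Rightarrow> 'b::comm_semiring_1"
  assumes "set xs \<subseteq> C" "finite C"
  shows "(\<Sum>x\<leftarrow>xs. G x) = (\<Sum>y\<in>C. of_nat (count_list xs y) * G y)"
  using assms(1)
proof (induction xs)
  case (Cons x xs)
  have "(\<Sum>y\<in>C. of_nat (count_list (x # xs) y) * G y)
      = (\<Sum>y\<in>C. of_nat (count_list xs y) * G y + (if x = y then G y else 0))"
    by (intro sum.cong) (auto simp: algebra_simps)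
  also have "\<dots> = (\<Sum>y\<in>C. of_nat (count_list xs y) * G y) + (\<Sum>y\<in>C. if x = y then G y else 0)"
    by (rule sum.distrib)
  also have "\<dots> = (\<Sum>x\<leftarrow>xs. G x) + G x"
    using Cons assms(2) by simp
  finally show ?case
    by (simp add: add.commute)
qed simp

lemma sum_list_sum_swap: "(\<Sum>a\<leftarrow>xs. \<Sum>x\<in>S. f a x) = (\<Sum>x\<in>S. \<Sum>a\<leftarrow>xs. f a x)"
  by (induction xs) (simp_all add: sum.distrib)

lemma sum_list_concat_map:
  "(\<Sum>a\<leftarrow>concat xss. h a) = (\<Sum>xs\<leftarrow>xss. \<Sum>a\<leftarrow>xs. h a)"
  by (induction xss) simp_all

definition tuples :: "nat \<Rightarrow> (nat \<Rightarrow> 'a set) \<Rightarrow> 'a list set" where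
  "tuples n B = {xs. length xs = n \<and> (\<forall>i<n. xs ! i \<in> B i)}"

lemma bij_betw_PiE_tuples: "bij_betw (\<lambda>f. map f [0..<n]) (PiE {..<n} B) (tuples n B)"
proof (rule bij_betw_byWitness[where f'="\<lambda>xs. restrict (nth xs) {..<n}"])
  show "\<forall>f\<in>PiE {..<n} B. restrict (nth (map f [0..<n])) {..<n} = f"
  proof
    fix f assume f: "f \<in> PiE {..<n} B"
    show "restrict (nth (map f [0..<n])) {..<n} = f"
    proof
      fix i show "restrict (nth (map f [0..<n])) {..<n} i = f i"
        using PiE_arb[OF f, of i] by (cases "i < n") auto
    qed
  qed
  show "\<forall>xs\<in>tuples n B. map (restrict (nth xs) {..<n}) [0..<n] = xs"
    unfolding tuples_def by (intro ballI nth_equalityI) auto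
  show "(\<lambda>f. map f [0..<n]) ` PiE {..<n} B \<subseteq> tuples n B"
    by (auto simp: tuples_def PiE_def Pi_def)
  show "(\<lambda>xs. restrict (nth xs) {..<n}) ` tuples n B \<subseteq> PiE {..<n} B"
    by (rule image_subsetI) (unfold restrict_PiE_iff tuples_def, auto)
qed

lemma finite_tuples: "(\<And>i. i < n \<Longrightarrow> finite (B i)) \<Longrightarrow> finite (tuples n B)"
  using bij_betw_finite[OF bij_betw_PiE_tuples] by (auto intro!: finite_PiE)

lemma card_tuples: "(\<And>i. i < n \<Longrightarrow> finite (B i)) \<Longrightarrow> card (tuples n B) = (\<Prod>i<n. card (B i))"
  using bij_betw_same_card[OF bij_betw_PiE_tuples, of n B] by (simp add: card_PiE)

lemma sum_prod_tuples:
  fixes F :: "nat \<Rightarrow> 'a \<Rightarrow> 'c::comm_semiring_1"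
  assumes "\<And>i. i < n \<Longrightarrow> finite (B i)"
  shows "(\<Sum>xs\<in>tuples n B. \<Prod>i<n. F i (xs ! i)) = (\<Prod>i<n. \<Sum>b\<in>B i. F i b)"
proof -
  have "(\<Prod>i<n. \<Sum>b\<in>B i. F i b) = (\<Sum>f\<in>PiE {..<n} B. \<Prod>i<n. F i (f i))"
    using assms by (intro prod_sum_PiE) auto
  also have "\<dots> = (\<Sum>f\<in>PiE {..<n} B. \<Prod>i<n. F i (map f [0..<n] ! i))"
    by (intro sum.cong prod.cong) auto
  also have "\<dots> = (\<Sum>xs\<in>tuples n B. \<Prod>i<n. F i (xs ! i))"
    by (rule sum.reindex_bij_betw[OF bij_betw_PiE_tuples])
  finally show ?thesis by simp
qed

lemma cube_eq_tuples: "cube k = tuples k (\<lambda>_. {-1, 1})"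
  unfolding cube_def tuples_def by (auto simp: subset_iff in_set_conv_nth)

lemma cube_eq_set_n_lists: "cube k = set (List.n_lists k [-1, 1])"
  by (simp add: cube_def set_n_lists)

lemma finite_cube [simp]: "finite (cube k)"
  by (simp add: cube_eq_set_n_lists)

lemma replicate_in_cube: "replicate k 1 \<in> cube k"
  unfolding cube_def by (induction k) auto

lemma cube_nonempty: "cube k \<noteq> {}"
  using replicate_in_cube by blast

lemma nth_in_cube: "x \<in> cube k \<Longrightarrow> i < k \<Longrightarrow> x ! i \<in> {-1, 1}"
  by (auto simp: cube_eq_tuples tuples_def)

lemma map_nth_in_cube:
  assumes "x \<in> cube n" "length a = k" "set a \<subseteq> {..<n}"
  shows "map (nth x) a \<in> cube k"
proof -
  have "x ! i \<in> set x" if "i \<in> set a" for i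
    using assms that by (auto simp: cube_def intro!: nth_mem)
  then show ?thesis
    using assms by (auto simp: cube_def)
qed

section \<open>The noise operator\<close>

lemma flip_prob_sum: "flip_prob p q a (-1) + flip_prob p q a 1 = 1"
  by (simp add: flip_prob_def)

lemma flip_prob_nonneg: "p \<in> {0..1} \<Longrightarrow> q \<in> {0..1} \<Longrightarrow> 0 \<le> flip_prob p q a b"
  by (auto simp: flip_prob_def)

lemma flip_prob_le_1: "p \<in> {0..1} \<Longrightarrow> q \<in> {0..1} \<Longrightarrow> flip_prob p q a b \<le> 1"
  by (auto simp: flip_prob_def)

lemma sum_flip_prob_products: "(\<Sum>z\<in>cube n. \<Prod>i<n. flip_prob p q (x ! i) (z ! i)) = 1"
proof -
  have "(\<Sum>z\<in>cube n. \<Prod>i<n. flip_prob p q (x ! i) (z ! i))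
      = (\<Prod>i<n. \<Sum>b\<in>{-1, 1}. flip_prob p q (x ! i) b)"
    unfolding cube_eq_tuples by (rule sum_prod_tuples) auto
  also have "\<dots> = 1"
    using flip_prob_sum by simp
  finally show ?thesis .
qed

definition noisy_expectation :: "nat \<Rightarrow> (int list \<Rightarrow> real) \<Rightarrow> int list \<Rightarrow> real \<Rightarrow> real \<Rightarrow> real" where
  "noisy_expectation k Q y p q = (\<Sum>z\<in>cube k. Q z * (\<Prod>i<k. flip_prob p q (y ! i) (z ! i)))"

lemma E_noisy_eq_sum_noisy_expectation:
  "E_noisy k Q \<mu> p q = (\<Sum>y\<in>cube k. \<mu> y * noisy_expectation k Q y p q)"
  by (simp add: E_noisy_def noisy_expectation_def)

lemma restriction_fibre_eq_tuples:
  assumes a: "length a = k" "distinct a" "set a \<subseteq> {..<n}" and z: "z \<in> cube k"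
  shows "{x \<in> cube n. map (nth x) a = z} = tuples n (\<lambda>i. {b \<in> {-1, 1}. \<forall>j<k. a ! j = i \<longrightarrow> b = z ! j})"
    (is "_ = tuples n ?B")
proof (intro set_eqI iffI)
  fix x assume x: "x \<in> {x \<in> cube n. map (nth x) a = z}"
  then have "x ! (a ! j) = z ! j" if "j < k" for j
    using a that by auto
  then show "x \<in> tuples n ?B"
    using x by (auto simp: cube_eq_tuples tuples_def)
next
  fix x assume x: "x \<in> tuples n ?B"
  have "x \<in> cube n"
    using x by (auto simp: cube_eq_tuples tuples_def)
  moreover have "map (nth x) a = z"
  proof (rule nth_equalityI)
    show "length (map (nth x) a) = length z"
      using a z by (simp add: cube_def)
    fix j assume "j < length (map (nth x) a)"
    with a have "j < k" "a ! j < n"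
      by (auto dest: nth_mem)
    then show "map (nth x) a ! j = z ! j"
      using x a by (auto simp: tuples_def)
  qed
  ultimately show "x \<in> {x \<in> cube n. map (nth x) a = z}"
    by simp
qed

lemma noise_marginal:
  assumes a: "length a = k" "distinct a" "set a \<subseteq> {..<n}"
  shows "(\<Sum>x\<in>cube n. (\<Prod>i<n. flip_prob p q (x0 ! i) (x ! i)) * Q (map (nth x) a))
       = noisy_expectation k Q (map (nth x0) a) p q"
proof -
  define F where "F i b = flip_prob p q (x0 ! i) b" for i b
  have fibre: "(\<Sum>x\<in>{x \<in> cube n. map (nth x) a = z}. \<Prod>i<n. F i (x ! i)) = (\<Prod>j<k. F (a ! j) (z ! j))"
    if z: "z \<in> cube k" for z
  proof -
    define B where "B i = {b \<in> {-1, 1}. \<forall>j<k. a ! j = i \<longrightarrow> b = z ! j}" for i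
    have B_at_a: "B (a ! j) = {z ! j}" if "j < k" for j
    proof -
      have "j' = j" if "j' < k" "a ! j' = a ! j" for j'
        using a \<open>j < k\<close> that nth_eq_iff_index_eq by metis
      then show ?thesis
        using nth_in_cube[OF z \<open>j < k\<close>] \<open>j < k\<close> unfolding B_def by auto
    qed
    have B_outside: "B i = {-1, 1}" if "i \<notin> set a" for i
      using that a unfolding B_def by (auto simp: in_set_conv_nth)
    have "(\<Sum>x\<in>{x \<in> cube n. map (nth x) a = z}. \<Prod>i<n. F i (x ! i)) = (\<Prod>i<n. \<Sum>b\<in>B i. F i b)"
      unfolding restriction_fibre_eq_tuples[OF a z] B_def[symmetric]
      by (rule sum_prod_tuples) (simp add: B_def)
    also have "\<dots> = (\<Prod>i\<in>set a. \<Sum>b\<in>B i. F i b)"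
      using a B_outside flip_prob_sum by (intro prod.mono_neutral_right) (auto simp: F_def)
    also have "\<dots> = (\<Prod>j<k. \<Sum>b\<in>B (a ! j). F (a ! j) b)"
    proof -
      have "set a = nth a ` {..<k}" "inj_on (nth a) {..<k}"
        using a by (auto simp: in_set_conv_nth inj_on_def nth_eq_iff_index_eq)
      then show ?thesis
        by (simp add: prod.reindex)
    qed
    also have "\<dots> = (\<Prod>j<k. F (a ! j) (z ! j))"
      using B_at_a by simp
    finally show ?thesis .
  qed
  have "(\<Sum>x\<in>cube n. (\<Prod>i<n. F i (x ! i)) * Q (map (nth x) a))
      = (\<Sum>z\<in>cube k. Q z * (\<Sum>x\<in>{x \<in> cube n. map (nth x) a = z}. \<Prod>i<n. F i (x ! i)))"
    using a by (intro sum_by_fibres) (auto intro: map_nth_in_cube)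
  also have "\<dots> = noisy_expectation k Q (map (nth x0) a) p q"
    using a fibre by (simp add: noisy_expectation_def F_def)
  finally show ?thesis
    by (simp add: F_def)
qed

definition abs_mass :: "nat \<Rightarrow> (int list \<Rightarrow> real) \<Rightarrow> real" where
  "abs_mass k Q = (\<Sum>z\<in>cube k. \<bar>Q z\<bar>)"

lemma abs_mass_nonneg: "0 \<le> abs_mass k Q"
  by (simp add: abs_mass_def sum_nonneg)

lemma abs_le_abs_mass: "z \<in> cube k \<Longrightarrow> \<bar>Q z\<bar> \<le> abs_mass k Q"
  unfolding abs_mass_def by (rule member_le_sum) auto

lemma abs_noisy_expectation_le:
  assumes "p \<in> {0..1}" "q \<in> {0..1}"
  shows "\<bar>noisy_expectation k Q y p q\<bar> \<le> abs_mass k Q"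
proof -
  have "\<bar>noisy_expectation k Q y p q\<bar> \<le> (\<Sum>z\<in>cube k. \<bar>Q z * (\<Prod>i<k. flip_prob p q (y ! i) (z ! i))\<bar>)"
    unfolding noisy_expectation_def by (rule sum_abs)
  also have "\<dots> \<le> (\<Sum>z\<in>cube k. \<bar>Q z\<bar>)"
  proof (rule sum_mono)
    fix z
    have "0 \<le> (\<Prod>i<k. flip_prob p q (y ! i) (z ! i))" "(\<Prod>i<k. flip_prob p q (y ! i) (z ! i)) \<le> 1"
      using assms by (auto intro!: prod_nonneg prod_le_1 simp: flip_prob_nonneg flip_prob_le_1)
    then show "\<bar>Q z * (\<Prod>i<k. flip_prob p q (y ! i) (z ! i))\<bar> \<le> \<bar>Q z\<bar>"
      by (simp add: abs_mult mult_left_le)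
  qed
  finally show ?thesis
    unfolding abs_mass_def .
qed

lemma abs_E_noisy_le:
  assumes "prob_on_cube k \<mu>" "p \<in> {0..1}" "q \<in> {0..1}"
  shows "\<bar>E_noisy k Q \<mu> p q\<bar> \<le> abs_mass k Q"
proof -
  have "\<bar>E_noisy k Q \<mu> p q\<bar> \<le> (\<Sum>y\<in>cube k. \<bar>\<mu> y * noisy_expectation k Q y p q\<bar>)"
    unfolding E_noisy_eq_sum_noisy_expectation by (rule sum_abs)
  also have "\<dots> \<le> (\<Sum>y\<in>cube k. \<mu> y * abs_mass k Q)"
    using assms abs_noisy_expectation_le
    by (intro sum_mono) (simp add: prob_on_cube_def abs_mult mult_left_mono)
  also have "\<dots> = abs_mass k Q"
    using assms(1) by (simp add: prob_on_cube_def flip: sum_distrib_right)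
  finally show ?thesis .
qed

lemma E_noisy_le_Opt_plus:
  assumes "prob_on_cube k \<mu>" "p \<in> {0..1}" "q \<in> {0..1}"
  shows "E_noisy k Q \<mu> p q \<le> Opt_plus k Q \<mu>"
proof -
  have "bdd_above ((\<lambda>pq. E_noisy k Q \<mu> (fst pq) (snd pq)) ` ({0..1} \<times> {0..1}))"
  proof (rule bdd_aboveI)
    fix e assume "e \<in> (\<lambda>pq. E_noisy k Q \<mu> (fst pq) (snd pq)) ` ({0..1} \<times> {0..1})"
    then obtain p' q' where "p' \<in> {0..1}" "q' \<in> {0..1}" "e = E_noisy k Q \<mu> p' q'"
      by auto
    then show "e \<le> abs_mass k Q"
      using abs_E_noisy_le[OF assms(1), of p' q' Q] by simp
  qed
  moreover have "(p, q) \<in> {0..1} \<times> {0..1}"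
    using assms by simp
  ultimately show ?thesis
    unfolding Opt_plus_def by (metis (no_types, lifting) cSUP_upper fst_conv snd_conv)
qed

lemma Opt_plus_le:
  assumes "\<And>p q. p \<in> {0..1} \<Longrightarrow> q \<in> {0..1} \<Longrightarrow> E_noisy k Q \<mu> p q \<le> c"
  shows "Opt_plus k Q \<mu> \<le> c"
  unfolding Opt_plus_def by (rule cSUP_least) (use assms in auto)

text \<open>With \<open>q = 1 - p\<close> the noise forgets the input: every coordinate becomes \<open>1\<close> with
  probability \<open>1 - p\<close>, i.e. it gets mean \<open>1 - 2 p\<close>.\<close>
lemma noisy_expectation_forgetful:
  "noisy_expectation k Q y p (1 - p) = E_Q k Q (1 - 2 * p)"
  unfolding noisy_expectation_def E_Q_def
proof (intro sum.cong refl arg_cong2[where f="(*)"] prod.cong)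
  fix z i assume "z \<in> cube k" "i \<in> {..<k}"
  then have "z ! i \<in> {-1, 1}"
    using nth_in_cube by blast
  then show "flip_prob p (1 - p) (y ! i) (z ! i) = (1 + (1 - 2 * p) * real_of_int (z ! i)) / 2"
    by (auto simp: flip_prob_def)
qed

lemma E_noisy_forgetful:
  assumes "prob_on_cube k \<mu>"
  shows "E_noisy k Q \<mu> p (1 - p) = E_Q k Q (1 - 2 * p)"
  using assms unfolding E_noisy_eq_sum_noisy_expectation noisy_expectation_forgetful
  by (simp add: prob_on_cube_def flip: sum_distrib_right)

lemma E_Q_plus_le_Opt_plus:
  assumes "prob_on_cube k \<mu>"
  shows "E_Q_plus k Q \<le> Opt_plus k Q \<mu>"
  unfolding E_Q_plus_def
proof (rule cSUP_least)
  fix r :: real assume "r \<in> {-1..1}"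
  then have p: "(1 - r) / 2 \<in> {0..1}" "1 - (1 - r) / 2 \<in> {0..1}"
    by auto
  have "1 - 2 * ((1 - r) / 2) = r"
    by (simp add: field_simps)
  then have "E_Q k Q r = E_noisy k Q \<mu> ((1 - r) / 2) (1 - (1 - r) / 2)"
    using E_noisy_forgetful[OF assms, of Q "(1 - r) / 2"] by simp
  also have "\<dots> \<le> Opt_plus k Q \<mu>"
    by (rule E_noisy_le_Opt_plus[OF assms p])
  finally show "E_Q k Q r \<le> Opt_plus k Q \<mu>" .
qed simp

section \<open>From instances to distributions\<close>

lemma inst_val_le_inst_opt: "x \<in> cube n \<Longrightarrow> inst_val f I x \<le> inst_opt f n I"
  unfolding inst_opt_def by (rule Max_ge) auto

lemma inst_opt_le: "(\<And>x. x \<in> cube n \<Longrightarrow> inst_val f I x \<le> c) \<Longrightarrow> inst_opt f n I \<le> c"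
  unfolding inst_opt_def using cube_nonempty by (subst Max_le_iff) auto

lemma inst_opt_attained:
  obtains x where "x \<in> cube n" "inst_val f I x = inst_opt f n I"
  using Max_in[of "(\<lambda>x. inst_val f I x) ` cube n"] cube_nonempty
  unfolding inst_opt_def by fastforce

lemma constraint_view_in_cube:
  assumes "valid_instance n k I" "x \<in> cube n" "a \<in> set I"
  shows "map (nth x) a \<in> cube k"
  using assms by (intro map_nth_in_cube) (auto simp: valid_instance_def)

lemma inst_opt_eq_1_imp_satisfying_assignment:
  assumes P01: "\<forall>y\<in>cube k. P y \<in> {0, 1}" and I: "valid_instance n k I"
    and opt: "inst_opt P n I = 1"
  obtains x where "x \<in> cube n" "\<forall>a\<in>set I. P (map (nth x) a) = 1"
proof -
  obtain x where x: "x \<in> cube n" "inst_val P I x = 1"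
    using opt inst_opt_attained by metis
  have slack_nonneg: "0 \<le> 1 - P (map (nth x) a)" if "a \<in> set I" for a
    using P01 constraint_view_in_cube[OF I x(1) that] by fastforce
  have "(\<Sum>a\<leftarrow>I. P (map (nth x) a)) = real (length I)"
    using x(2) I by (simp add: inst_val_def valid_instance_def)
  then have "(\<Sum>a\<leftarrow>I. 1 - P (map (nth x) a)) = 0"
    by (simp add: sum_list_subtractf sum_list_triv)
  then have "\<forall>a\<in>set I. P (map (nth x) a) = 1"
    using slack_nonneg by (subst (asm) sum_list_nonneg_eq_0_iff) auto
  with x(1) show thesis
    by (rule that)
qed

text \<open>The distribution of the local view \<open>x|\<^sub>a\<close> of an assignment \<open>x\<close> on a uniformly random
  constraint \<open>a\<close> of \<open>I\<close>.\<close>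
definition view_distribution :: "nat list list \<Rightarrow> int list \<Rightarrow> int list \<Rightarrow> real" where
  "view_distribution I x y = real (count_list (map (\<lambda>a. map (nth x) a) I) y) / real (length I)"

lemma sum_view_distribution:
  assumes "valid_instance n k I" "x \<in> cube n"
  shows "(\<Sum>y\<in>cube k. view_distribution I x y * G y) = (\<Sum>a\<leftarrow>I. G (map (nth x) a)) / real (length I)"
proof -
  have "(\<Sum>a\<leftarrow>I. G (map (nth x) a)) = (\<Sum>y\<leftarrow>map (\<lambda>a. map (nth x) a) I. G y)"
    by (simp add: o_def)
  also have "\<dots> = (\<Sum>y\<in>cube k. real (count_list (map (\<lambda>a. map (nth x) a) I) y) * G y)"
    using constraint_view_in_cube[OF assms] by (intro sum_list_map_eq_sum_count_list) auto
  finally show ?thesis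
    by (simp add: view_distribution_def sum_divide_distrib)
qed

lemma prob_on_cube_view_distribution:
  assumes "valid_instance n k I" "x \<in> cube n"
  shows "prob_on_cube k (view_distribution I x)"
proof -
  have "view_distribution I x y = 0" if "y \<notin> cube k" for y
    using constraint_view_in_cube[OF assms] that
    by (auto simp: view_distribution_def count_list_0_iff)
  moreover have "(\<Sum>y\<in>cube k. view_distribution I x y) = 1"
    using sum_view_distribution[OF assms, of "\<lambda>_. 1"] assms(1)
    by (simp add: sum_list_triv valid_instance_def)
  ultimately show ?thesis
    by (simp add: prob_on_cube_def view_distribution_def)
qed

lemma view_distribution_pos_imp_view:
  assumes "view_distribution I x y > 0"
  shows "\<exists>a\<in>set I. map (nth x) a = y"
proof -
  have "count_list (map (\<lambda>a. map (nth x) a) I) y \<noteq> 0"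
  proof
    assume "count_list (map (\<lambda>a. map (nth x) a) I) y = 0"
    then show False
      using assms by (simp add: view_distribution_def)
  qed
  then show ?thesis
    by (auto simp: count_list_0_iff)
qed

lemma E_noisy_view_distribution:
  assumes I: "valid_instance n k I" and x0: "x0 \<in> cube n"
  shows "E_noisy k Q (view_distribution I x0) p q
       = (\<Sum>x\<in>cube n. (\<Prod>i<n. flip_prob p q (x0 ! i) (x ! i)) * inst_val Q I x)"
proof -
  define w where "w x = (\<Prod>i<n. flip_prob p q (x0 ! i) (x ! i))" for x
  have "E_noisy k Q (view_distribution I x0) p q
      = (\<Sum>a\<leftarrow>I. noisy_expectation k Q (map (nth x0) a) p q) / real (length I)"
    unfolding E_noisy_eq_sum_noisy_expectation by (rule sum_view_distribution[OF I x0])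
  also have "\<dots> = (\<Sum>a\<leftarrow>I. \<Sum>x\<in>cube n. w x * Q (map (nth x) a)) / real (length I)"
    using I unfolding w_def valid_instance_def
    by (simp add: noise_marginal cong: map_cong)
  also have "\<dots> = (\<Sum>x\<in>cube n. \<Sum>a\<leftarrow>I. w x * Q (map (nth x) a)) / real (length I)"
    by (simp add: sum_list_sum_swap)
  also have "\<dots> = (\<Sum>x\<in>cube n. w x * inst_val Q I x)"
    by (simp add: inst_val_def sum_list_const_mult sum_divide_distrib)
  finally show ?thesis
    by (simp add: w_def)
qed

lemma view_distribution_of_satisfying_assignment:
  assumes P01: "\<forall>y\<in>cube k. P y \<in> {0, 1}" and I: "valid_instance n k I"
    and opt: "inst_opt P n I = 1"
  shows "\<exists>\<mu>. prob_on_cube k \<mu> \<and> (\<forall>y\<in>cube k. \<mu> y > 0 \<longrightarrow> P y = 1) \<and>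
     (\<forall>p\<in>{0..1}. \<forall>q\<in>{0..1}. E_noisy k Q \<mu> p q \<le> inst_opt Q n I)"
proof -
  obtain x0 where x0: "x0 \<in> cube n" "\<forall>a\<in>set I. P (map (nth x0) a) = 1"
    using inst_opt_eq_1_imp_satisfying_assignment[OF P01 I opt] .
  define \<mu> where "\<mu> = view_distribution I x0"
  have "\<forall>y\<in>cube k. \<mu> y > 0 \<longrightarrow> P y = 1"
    using view_distribution_pos_imp_view x0(2) unfolding \<mu>_def by blast
  moreover have "E_noisy k Q \<mu> p q \<le> inst_opt Q n I" if "p \<in> {0..1}" "q \<in> {0..1}" for p q
  proof -
    have "E_noisy k Q \<mu> p q \<le> (\<Sum>x\<in>cube n. (\<Prod>i<n. flip_prob p q (x0 ! i) (x ! i)) * inst_opt Q n I)"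
      unfolding \<mu>_def E_noisy_view_distribution[OF I x0(1)] using that
      by (intro sum_mono mult_left_mono inst_val_le_inst_opt prod_nonneg flip_prob_nonneg) auto
    also have "\<dots> = inst_opt Q n I"
      by (simp add: sum_flip_prob_products flip: sum_distrib_right)
    finally show ?thesis .
  qed
  ultimately show ?thesis
    using prob_on_cube_view_distribution[OF I x0(1)] unfolding \<mu>_def by blast
qed

lemma bounded_convergent_subseq_finite:
  fixes M :: "nat \<Rightarrow> 'a \<Rightarrow> real"
  assumes "finite S" and bounded: "\<And>n y. y \<in> S \<Longrightarrow> M n y \<in> {0..1}"
  shows "\<exists>r l. strict_mono r \<and> (\<forall>y\<in>S. (\<lambda>n. M (r n) y) \<longlonglongrightarrow> l y)"
proof -
  have "\<forall>\<delta>\<subseteq>S. \<exists>l::'a \<Rightarrow> real. \<exists>r::nat \<Rightarrow> nat.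
    strict_mono r \<and> (\<forall>e>0. eventually (\<lambda>n. \<forall>y\<in>\<delta>. dist (M (r n) y) (l y) < e) sequentially)"
  proof (rule compact_lemma_general[where proj="\<lambda>f y. f y" and unproj="\<lambda>e. e"])
    fix y assume "y \<in> S"
    then have "(\<lambda>f. f y) ` range M \<subseteq> {0..1}"
      using bounded by auto
    then show "bounded ((\<lambda>f. f y) ` range M)"
      by (rule bounded_subset[OF bounded_closed_interval])
  qed (use \<open>finite S\<close> in auto)
  then obtain l r where r: "strict_mono r"
    and conv: "\<forall>e>0. eventually (\<lambda>n. \<forall>y\<in>S. dist (M (r n) y) (l y) < e) sequentially"
    by blast
  have "(\<lambda>n. M (r n) y) \<longlonglongrightarrow> l y" if "y \<in> S" for y
    unfolding tendsto_iff
  proof (intro allI impI)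
    fix e :: real assume "e > 0"
    then have "eventually (\<lambda>n. \<forall>y\<in>S. dist (M (r n) y) (l y) < e) sequentially"
      using conv by blast
    then show "eventually (\<lambda>n. dist (M (r n) y) (l y) < e) sequentially"
      by (rule eventually_mono) (use that in blast)
  qed
  with r show ?thesis
    by blast
qed

lemma prob_on_cube_convergent_subseq:
  fixes M :: "nat \<Rightarrow> int list \<Rightarrow> real"
  assumes M: "\<And>n. prob_on_cube k (M n)"
  shows "\<exists>r \<mu>. strict_mono r \<and> prob_on_cube k \<mu> \<and> (\<forall>y\<in>cube k. (\<lambda>n. M (r n) y) \<longlonglongrightarrow> \<mu> y)"
proof -
  have bounds: "M n y \<in> {0..1}" if "y \<in> cube k" for n y
  proof -
    have "M n y \<le> (\<Sum>y\<in>cube k. M n y)"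
      using M[of n] that by (intro member_le_sum) (auto simp: prob_on_cube_def)
    then show ?thesis
      using M[of n] by (simp add: prob_on_cube_def)
  qed
  then obtain r l where r: "strict_mono r" and lim: "\<And>y. y \<in> cube k \<Longrightarrow> (\<lambda>n. M (r n) y) \<longlonglongrightarrow> l y"
    using bounded_convergent_subseq_finite[where M = M, OF finite_cube] by blast
  define \<mu> where "\<mu> y = (if y \<in> cube k then l y else 0)" for y
  have "0 \<le> \<mu> y" for y
  proof (cases "y \<in> cube k")
    case True
    then have "0 \<le> l y"
      using lim[OF True] bounds[OF True] by (intro LIMSEQ_le_const) auto
    then show ?thesis
      using True by (simp add: \<mu>_def)
  qed (simp add: \<mu>_def)
  moreover have "(\<Sum>y\<in>cube k. \<mu> y) = 1"
  proof -
    have "(\<lambda>n. \<Sum>y\<in>cube k. M (r n) y) \<longlonglongrightarrow> (\<Sum>y\<in>cube k. l y)"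
      using lim by (intro tendsto_sum) auto
    moreover have "(\<lambda>n. \<Sum>y\<in>cube k. M (r n) y) = (\<lambda>n. 1)"
      using M by (simp add: prob_on_cube_def)
    ultimately show ?thesis
      by (simp add: \<mu>_def LIMSEQ_const_iff)
  qed
  ultimately have "prob_on_cube k \<mu>"
    by (simp add: prob_on_cube_def \<mu>_def)
  with r lim show ?thesis
    by (intro exI[of _ r] exI[of _ \<mu>]) (simp add: \<mu>_def)
qed

lemma tendsto_E_noisy:
  assumes "\<And>y. y \<in> cube k \<Longrightarrow> (\<lambda>n. M n y) \<longlonglongrightarrow> \<mu> y"
  shows "(\<lambda>n. E_noisy k Q (M n) p q) \<longlonglongrightarrow> E_noisy k Q \<mu> p q"
  unfolding E_noisy_eq_sum_noisy_expectation using assms by (intro tendsto_sum tendsto_mult_right) auto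

lemma pos_it_useless_imp_near_optimal_distribution:
  assumes P01: "\<forall>y\<in>cube k. P y \<in> {0, 1}" and useless: "pos_it_useless k P Q" and "\<epsilon> > 0"
  shows "\<exists>\<mu>. prob_on_cube k \<mu> \<and> (\<forall>y\<in>cube k. \<mu> y > 0 \<longrightarrow> P y = 1) \<and>
      (\<forall>p\<in>{0..1}. \<forall>q\<in>{0..1}. E_noisy k Q \<mu> p q \<le> E_Q_plus k Q + \<epsilon>)"
proof -
  obtain n I where I: "valid_instance n k I" "inst_opt P n I = 1"
    and Q_opt: "inst_opt Q n I \<le> E_Q_plus k Q + \<epsilon>"
    using useless \<open>\<epsilon> > 0\<close> unfolding pos_it_useless_def by blast
  obtain \<mu> where \<mu>: "prob_on_cube k \<mu>" "\<forall>y\<in>cube k. \<mu> y > 0 \<longrightarrow> P y = 1"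
    and noisy: "\<forall>p\<in>{0..1}. \<forall>q\<in>{0..1}. E_noisy k Q \<mu> p q \<le> inst_opt Q n I"
    using view_distribution_of_satisfying_assignment[OF P01 I, of Q] by blast
  have "\<forall>p\<in>{0..1}. \<forall>q\<in>{0..1}. E_noisy k Q \<mu> p q \<le> E_Q_plus k Q + \<epsilon>"
    using noisy order.trans[OF _ Q_opt] by blast
  with \<mu> show ?thesis
    by blast
qed

lemma limit_of_near_optimal_distributions:
  fixes M :: "nat \<Rightarrow> int list \<Rightarrow> real"
  assumes M: "\<And>m. prob_on_cube k (M m)" "\<And>m y. y \<in> cube k \<Longrightarrow> M m y > 0 \<Longrightarrow> P y = 1"
    "\<And>m p q. p \<in> {0..1} \<Longrightarrow> q \<in> {0..1} \<Longrightarrow> E_noisy k Q (M m) p q \<le> E + inverse (real (Suc m))"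
  shows "\<exists>\<mu>. prob_on_cube k \<mu> \<and> (\<forall>y\<in>cube k. \<mu> y > 0 \<longrightarrow> P y = 1) \<and> Opt_plus k Q \<mu> \<le> E"
proof -
  from prob_on_cube_convergent_subseq[where M=M, OF M(1)]
  obtain r \<mu> where r: "strict_mono r" and \<mu>: "prob_on_cube k \<mu>"
    and lim: "\<And>y. y \<in> cube k \<Longrightarrow> (\<lambda>n. M (r n) y) \<longlonglongrightarrow> \<mu> y"
    by blast
  have "P y = 1" if "y \<in> cube k" "\<mu> y > 0" for y
  proof -
    have "eventually (\<lambda>n. M (r n) y > 0) sequentially"
      using order_tendstoD(1)[OF lim[OF that(1)] that(2)] .
    then obtain N where "\<forall>n\<ge>N. M (r n) y > 0"
      unfolding eventually_sequentially by blast
    then have "M (r N) y > 0"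
      by simp
    then show ?thesis
      using M(2) that(1) by blast
  qed
  moreover have "Opt_plus k Q \<mu> \<le> E"
  proof (rule Opt_plus_le)
    fix p q :: real assume pq: "p \<in> {0..1}" "q \<in> {0..1}"
    have "(\<lambda>n. inverse (real (Suc (r n)))) \<longlonglongrightarrow> 0"
      using LIMSEQ_subseq_LIMSEQ[OF LIMSEQ_inverse_real_of_nat r] by (simp add: o_def)
    from tendsto_add[OF tendsto_const this]
    have bound: "(\<lambda>n. E + inverse (real (Suc (r n)))) \<longlonglongrightarrow> E"
      by simp
    have "eventually (\<lambda>n. E_noisy k Q (M (r n)) p q \<le> E + inverse (real (Suc (r n)))) sequentially"
      by (intro always_eventually allI M(3)[OF pq])
    moreover have "(\<lambda>n. E_noisy k Q (M (r n)) p q) \<longlonglongrightarrow> E_noisy k Q \<mu> p q"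
      by (rule tendsto_E_noisy) (rule lim)
    ultimately show "E_noisy k Q \<mu> p q \<le> E"
      using tendsto_le[OF sequentially_bot bound] by blast
  qed
  ultimately show ?thesis
    using \<mu> by blast
qed

lemma pos_it_useless_imp_distribution:
  assumes P01: "\<forall>y\<in>cube k. P y \<in> {0, 1}" and useless: "pos_it_useless k P Q"
  shows "\<exists>\<mu>. prob_on_cube k \<mu> \<and> (\<forall>y\<in>cube k. \<mu> y > 0 \<longrightarrow> P y = 1) \<and>
         Opt_plus k Q \<mu> = E_Q_plus k Q"
proof -
  have "\<forall>m. \<exists>\<mu>. prob_on_cube k \<mu> \<and> (\<forall>y\<in>cube k. \<mu> y > 0 \<longrightarrow> P y = 1) \<and>
      (\<forall>p\<in>{0..1}. \<forall>q\<in>{0..1}. E_noisy k Q \<mu> p q \<le> E_Q_plus k Q + inverse (real (Suc m)))"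
    using pos_it_useless_imp_near_optimal_distribution[OF P01 useless] by simp
  from choice[OF this] obtain M where "\<forall>m. prob_on_cube k (M m) \<and> (\<forall>y\<in>cube k. M m y > 0 \<longrightarrow> P y = 1) \<and>
      (\<forall>p\<in>{0..1}. \<forall>q\<in>{0..1}. E_noisy k Q (M m) p q \<le> E_Q_plus k Q + inverse (real (Suc m)))"
    by blast
  then have M: "\<And>m. prob_on_cube k (M m)" "\<And>m y. y \<in> cube k \<Longrightarrow> M m y > 0 \<Longrightarrow> P y = 1"
    "\<And>m p q. p \<in> {0..1} \<Longrightarrow> q \<in> {0..1} \<Longrightarrow>
       E_noisy k Q (M m) p q \<le> E_Q_plus k Q + inverse (real (Suc m))"
    by blast+
  have "\<exists>\<mu>. prob_on_cube k \<mu> \<and> (\<forall>y\<in>cube k. \<mu> y > 0 \<longrightarrow> P y = 1) \<and> Opt_plus k Q \<mu> \<le> E_Q_plus k Q"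
    using M by (rule limit_of_near_optimal_distributions)
  then obtain \<mu> where \<mu>: "prob_on_cube k \<mu>" "\<forall>y\<in>cube k. \<mu> y > 0 \<longrightarrow> P y = 1"
    and "Opt_plus k Q \<mu> \<le> E_Q_plus k Q"
    by blast
  moreover have "E_Q_plus k Q \<le> Opt_plus k Q \<mu>"
    by (rule E_Q_plus_le_Opt_plus[OF \<mu>(1)])
  ultimately show ?thesis
    by (intro exI[of _ \<mu>]) simp
qed

section \<open>From distributions to instances\<close>

definition sign_block :: "nat \<Rightarrow> int \<Rightarrow> nat set" where
  "sign_block N b = (if b = 1 then {..<N} else {N..<2 * N})"

lemma finite_sign_block [simp]: "finite (sign_block N b)"
  by (simp add: sign_block_def)

lemma card_sign_block [simp]: "card (sign_block N b) = N"
  by (simp add: sign_block_def)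

lemma sign_block_subset: "sign_block N b \<subseteq> {..<2 * N}"
  by (auto simp: sign_block_def)

definition pattern_tuples :: "nat \<Rightarrow> nat \<Rightarrow> int list \<Rightarrow> nat list set" where
  "pattern_tuples N k y = tuples k (\<lambda>i. sign_block N (y ! i))"

definition distinct_pattern_tuples :: "nat \<Rightarrow> nat \<Rightarrow> int list \<Rightarrow> nat list set" where
  "distinct_pattern_tuples N k y = {a \<in> pattern_tuples N k y. distinct a}"

lemma finite_pattern_tuples: "finite (pattern_tuples N k y)"
  unfolding pattern_tuples_def by (rule finite_tuples) simp

lemma card_pattern_tuples: "card (pattern_tuples N k y) = N ^ k"
  unfolding pattern_tuples_def by (subst card_tuples) simp_all

lemma pattern_tuples_bounded:
  assumes "a \<in> pattern_tuples N k y"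
  shows "length a = k" "set a \<subseteq> {..<2 * N}"
proof -
  show "length a = k"
    using assms by (simp add: pattern_tuples_def tuples_def)
  have "a ! i < 2 * N" if "i < k" for i
    using assms that sign_block_subset by (fastforce simp: pattern_tuples_def tuples_def)
  then show "set a \<subseteq> {..<2 * N}"
    using \<open>length a = k\<close> by (auto simp: in_set_conv_nth)
qed

lemma distinct_pattern_tuples_subset: "distinct_pattern_tuples N k y \<subseteq> pattern_tuples N k y"
  by (auto simp: distinct_pattern_tuples_def)

lemma finite_distinct_pattern_tuples: "finite (distinct_pattern_tuples N k y)"
  using finite_pattern_tuples finite_subset[OF distinct_pattern_tuples_subset] by blast

lemma distinct_pattern_tuples_nonempty:
  assumes "k \<le> N"
  shows "distinct_pattern_tuples N k y \<noteq> {}"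
proof -
  define a where "a = map (\<lambda>i. if y ! i = 1 then i else N + i) [0..<k]"
  have "inj_on (\<lambda>i. if y ! i = 1 then i else N + i) {0..<k}"
    using assms by (auto simp: inj_on_def split: if_splits)
  then have "distinct a"
    by (simp add: a_def distinct_map)
  moreover have "a \<in> pattern_tuples N k y"
    using assms by (auto simp: a_def pattern_tuples_def tuples_def sign_block_def)
  ultimately show ?thesis
    by (auto simp: distinct_pattern_tuples_def)
qed

definition planted_assignment :: "nat \<Rightarrow> int list" where
  "planted_assignment N = map (\<lambda>v. if v < N then 1 else -1) [0..<2 * N]"

lemma planted_assignment_in_cube: "planted_assignment N \<in> cube (2 * N)"
  by (auto simp: cube_def planted_assignment_def)

lemma planted_assignment_view:
  assumes "a \<in> pattern_tuples N k y" "y \<in> cube k"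
  shows "map (nth (planted_assignment N)) a = y"
proof (rule nth_equalityI)
  have a: "length a = k" "\<forall>i<k. a ! i \<in> sign_block N (y ! i)"
    using assms(1) by (auto simp: pattern_tuples_def tuples_def)
  then show "length (map (nth (planted_assignment N)) a) = length y"
    using assms(2) by (simp add: cube_def)
  fix i assume "i < length (map (nth (planted_assignment N)) a)"
  with a have i: "i < k" "a ! i \<in> sign_block N (y ! i)"
    by auto
  then have "a ! i < 2 * N"
    using sign_block_subset by blast
  with i show "map (nth (planted_assignment N)) a ! i = y ! i"
    using nth_in_cube[OF assms(2) \<open>i < k\<close>] a(1)
    by (auto simp: planted_assignment_def sign_block_def split: if_splits)
qed

definition pattern_instance :: "nat \<Rightarrow> nat \<Rightarrow> (int list \<Rightarrow> nat) \<Rightarrow> nat list list" where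
  "pattern_instance N k c =
     concat (map (\<lambda>y. concat (replicate (c y)
       (filter (\<lambda>a. a \<in> distinct_pattern_tuples N k y) (List.n_lists k [0..<2 * N]))))
     (List.n_lists k [-1, 1]))"

lemma set_filter_distinct_pattern_tuples:
  "set (filter (\<lambda>a. a \<in> distinct_pattern_tuples N k y) (List.n_lists k [0..<2 * N]))
     = distinct_pattern_tuples N k y"
proof -
  have "distinct_pattern_tuples N k y \<subseteq> set (List.n_lists k [0..<2 * N])"
    using pattern_tuples_bounded distinct_pattern_tuples_subset by (fastforce simp: set_n_lists)
  then show ?thesis
    by auto
qed

lemma sum_list_pattern_instance:
  "(\<Sum>a\<leftarrow>pattern_instance N k c. h a)
     = (\<Sum>y\<in>cube k. real (c y) * (\<Sum>a\<in>distinct_pattern_tuples N k y. h a))"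
proof -
  have "(\<Sum>a\<leftarrow>filter (\<lambda>a. a \<in> distinct_pattern_tuples N k y) (List.n_lists k [0..<2 * N]). h a)
      = (\<Sum>a\<in>distinct_pattern_tuples N k y. h a)" for y
    by (simp only: sum.distinct_set_conv_list[symmetric] distinct_filter distinct_n_lists
        distinct_upt set_filter_distinct_pattern_tuples)
  moreover have "(\<Sum>y\<leftarrow>List.n_lists k [-1, 1]. f y) = (\<Sum>y\<in>cube k. f y)" for f :: "int list \<Rightarrow> real"
    using sum.distinct_set_conv_list[of "List.n_lists k [-1, 1]" f]
    by (simp add: distinct_n_lists cube_eq_set_n_lists)
  ultimately show ?thesis
    by (simp add: pattern_instance_def sum_list_concat_map sum_list_replicate o_def)
qed

lemma set_pattern_instance:
  "set (pattern_instance N k c) = (\<Union>y\<in>{y \<in> cube k. c y > 0}. distinct_pattern_tuples N k y)"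
  unfolding pattern_instance_def cube_eq_set_n_lists
  by (auto simp del: set_filter simp: set_filter_distinct_pattern_tuples)

lemma card_filter_neg_one:
  assumes "x \<in> cube n" "A \<subseteq> {..<n}"
  shows "card {v \<in> A. x ! v = -1} = card A - card {v \<in> A. x ! v = 1}"
proof -
  have "{v \<in> A. x ! v = -1} = A - {v \<in> A. x ! v = 1}"
    using assms nth_in_cube by fastforce
  moreover have "finite A"
    using assms(2) finite_subset by blast
  ultimately show ?thesis
    by (simp add: card_Diff_subset)
qed

text \<open>An assignment \<open>x\<close> of the \<open>2 N\<close> variables is read as noise: a variable of the first block
  is \<open>-1\<close> with probability \<open>down_rate\<close>, one of the second block is \<open>1\<close> with probability
  \<open>up_rate\<close>.\<close>
definition down_rate :: "nat \<Rightarrow> int list \<Rightarrow> real" where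
  "down_rate N x = 1 - real (card {v \<in> {..<N}. x ! v = 1}) / N"

definition up_rate :: "nat \<Rightarrow> int list \<Rightarrow> real" where
  "up_rate N x = real (card {v \<in> {N..<2 * N}. x ! v = 1}) / N"

lemma card_ones_le_block:
  "card {v \<in> {..<N}. x ! v = 1} \<le> N" "card {v \<in> {N..<2 * N}. x ! v = 1} \<le> N"
proof -
  have "card {v \<in> {..<N}. x ! v = 1} \<le> card {..<N}"
    by (rule card_mono) auto
  then show "card {v \<in> {..<N}. x ! v = 1} \<le> N"
    by simp
  have "card {v \<in> {N..<2 * N}. x ! v = 1} \<le> card {N..<2 * N}"
    by (rule card_mono) auto
  then show "card {v \<in> {N..<2 * N}. x ! v = 1} \<le> N"
    by simp
qed

lemma rates_in_unit_interval:
  assumes "N > 0"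
  shows "down_rate N x \<in> {0..1}" "up_rate N x \<in> {0..1}"
  using card_ones_le_block[of N x] assms by (auto simp: down_rate_def up_rate_def field_simps)

lemma card_sign_block_value:
  assumes x: "x \<in> cube (2 * N)" and "N > 0" and b: "b \<in> {-1, 1}" and c: "c \<in> {-1, 1}"
  shows "real (card {v \<in> sign_block N b. x ! v = c}) = real N * flip_prob (down_rate N x) (up_rate N x) b c"
proof -
  have "card {v \<in> {..<N}. x ! v = -1} = N - card {v \<in> {..<N}. x ! v = 1}"
    using card_filter_neg_one[OF x, of "{..<N}"] by simp
  moreover have "card {v \<in> {N..<2 * N}. x ! v = -1} = N - card {v \<in> {N..<2 * N}. x ! v = 1}"
    using card_filter_neg_one[OF x, of "{N..<2 * N}"] by (simp add: subset_iff)
  ultimately show ?thesis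
    using b c card_ones_le_block[of N x] \<open>N > 0\<close>
    unfolding sign_block_def flip_prob_def down_rate_def up_rate_def
    by (auto simp: field_simps of_nat_diff)
qed

lemma pattern_tuples_fibre:
  assumes "z \<in> cube k"
  shows "{a \<in> pattern_tuples N k y. map (nth x) a = z}
       = tuples k (\<lambda>i. {v \<in> sign_block N (y ! i). x ! v = z ! i})"
proof (intro set_eqI iffI)
  fix a assume "a \<in> {a \<in> pattern_tuples N k y. map (nth x) a = z}"
  then show "a \<in> tuples k (\<lambda>i. {v \<in> sign_block N (y ! i). x ! v = z ! i})"
    by (auto simp: pattern_tuples_def tuples_def)
next
  fix a assume a: "a \<in> tuples k (\<lambda>i. {v \<in> sign_block N (y ! i). x ! v = z ! i})"
  then have "a \<in> pattern_tuples N k y"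
    by (auto simp: pattern_tuples_def tuples_def)
  moreover have "map (nth x) a = z"
    using a assms by (intro nth_equalityI) (auto simp: tuples_def cube_def)
  ultimately show "a \<in> {a \<in> pattern_tuples N k y. map (nth x) a = z}"
    by simp
qed

lemma sum_pattern_tuples:
  assumes x: "x \<in> cube (2 * N)" and "N > 0" and y: "y \<in> cube k"
  shows "(\<Sum>a\<in>pattern_tuples N k y. Q (map (nth x) a))
       = real N ^ k * noisy_expectation k Q y (down_rate N x) (up_rate N x)"
proof -
  define p where "p = down_rate N x"
  define q where "q = up_rate N x"
  have fibre: "real (card {a \<in> pattern_tuples N k y. map (nth x) a = z})
      = real N ^ k * (\<Prod>i<k. flip_prob p q (y ! i) (z ! i))" if z: "z \<in> cube k" for z
  proof -
    have "real (card {a \<in> pattern_tuples N k y. map (nth x) a = z})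
        = (\<Prod>i<k. real (card {v \<in> sign_block N (y ! i). x ! v = z ! i}))"
      unfolding pattern_tuples_fibre[OF z] by (subst card_tuples) simp_all
    also have "\<dots> = (\<Prod>i<k. real N * flip_prob p q (y ! i) (z ! i))"
      using card_sign_block_value[OF x \<open>N > 0\<close>] nth_in_cube[OF y] nth_in_cube[OF z]
      unfolding p_def q_def by (intro prod.cong) auto
    finally show ?thesis
      by (simp add: prod.distrib)
  qed
  have "map (nth x) a \<in> cube k" if "a \<in> pattern_tuples N k y" for a
    using map_nth_in_cube[OF x pattern_tuples_bounded[OF that]] .
  then have "(\<Sum>a\<in>pattern_tuples N k y. 1 * Q (map (nth x) a))
      = (\<Sum>z\<in>cube k. Q z * (\<Sum>a\<in>{a \<in> pattern_tuples N k y. map (nth x) a = z}. 1))"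
    by (intro sum_by_fibres finite_pattern_tuples) auto
  also have "\<dots> = real N ^ k * noisy_expectation k Q y p q"
    using fibre by (simp add: noisy_expectation_def sum_distrib_left algebra_simps)
  finally show ?thesis
    by (simp add: p_def q_def)
qed

lemma card_pattern_tuples_repeating:
  assumes "i < k" "j < k" "i \<noteq> j"
  shows "card {a \<in> pattern_tuples N k y. a ! i = a ! j} \<le> N ^ (k - 1)"
proof -
  define B where "B = (\<lambda>l. sign_block N (y ! l))(j := {0})"
  have "inj_on (\<lambda>a. a[j := 0]) {a \<in> pattern_tuples N k y. a ! i = a ! j}"
  proof (rule inj_onI)
    fix a b assume a: "a \<in> {a \<in> pattern_tuples N k y. a ! i = a ! j}"
      and b: "b \<in> {a \<in> pattern_tuples N k y. a ! i = a ! j}" and eq: "a[j := 0] = b[j := 0]"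
    have "a ! i = b ! i"
      using assms arg_cong[OF eq, of "\<lambda>xs. xs ! i"] by simp
    show "a = b"
    proof (rule nth_equalityI)
      show "length a = length b"
        using a b pattern_tuples_bounded(1) by blast
      fix l assume "l < length a"
      show "a ! l = b ! l"
      proof (cases "l = j")
        case True
        then show ?thesis
          using a b \<open>a ! i = b ! i\<close> by simp
      next
        case False
        then show ?thesis
          using arg_cong[OF eq, of "\<lambda>xs. xs ! l"] by simp
      qed
    qed
  qed
  moreover have "(\<lambda>a. a[j := 0]) ` {a \<in> pattern_tuples N k y. a ! i = a ! j} \<subseteq> tuples k B"
    by (auto simp: pattern_tuples_def tuples_def B_def nth_list_update)
  moreover have "finite (tuples k B)"
    by (rule finite_tuples) (simp add: B_def)
  ultimately have "card {a \<in> pattern_tuples N k y. a ! i = a ! j} \<le> card (tuples k B)"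
    by (rule card_inj_on_le)
  also have "card (tuples k B) = (\<Prod>l<k. card (B l))"
    by (rule card_tuples) (simp add: B_def)
  also have "\<dots> = (\<Prod>l<k. if l = j then 1 else N)"
    by (intro prod.cong) (auto simp: B_def)
  also have "\<dots> = (\<Prod>l\<in>{..<k} - {j}. N)"
    using assms by (subst prod.remove[of _ j]) auto
  also have "\<dots> = N ^ (k - 1)"
    using assms by simp
  finally show ?thesis .
qed

lemma card_nondistinct_pattern_tuples:
  "card (pattern_tuples N k y - distinct_pattern_tuples N k y) \<le> k * k * N ^ (k - 1)"
proof -
  let ?R = "\<lambda>i j. {a \<in> pattern_tuples N k y. a ! i = a ! j}"
  have "pattern_tuples N k y - distinct_pattern_tuples N k y \<subseteq> (\<Union>i<k. \<Union>j\<in>{..<k} - {i}. ?R i j)"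
    by (auto simp: distinct_pattern_tuples_def distinct_conv_nth dest: pattern_tuples_bounded(1))
  then have "card (pattern_tuples N k y - distinct_pattern_tuples N k y) \<le> card (\<Union>i<k. \<Union>j\<in>{..<k} - {i}. ?R i j)"
    by (rule card_mono[rotated]) (simp add: finite_pattern_tuples)
  also have "\<dots> \<le> (\<Sum>i<k. card (\<Union>j\<in>{..<k} - {i}. ?R i j))"
    by (rule card_UN_le) simp
  also have "\<dots> \<le> (\<Sum>i<k. \<Sum>j\<in>{..<k} - {i}. card (?R i j))"
    by (intro sum_mono card_UN_le) simp
  also have "\<dots> \<le> (\<Sum>i<k. \<Sum>j\<in>{..<k} - {i}. N ^ (k - 1))"
    by (intro sum_mono card_pattern_tuples_repeating) auto
  also have "\<dots> \<le> (\<Sum>i<k. \<Sum>j<k. N ^ (k - 1))"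
    by (intro sum_mono sum_mono2) auto
  also have "\<dots> = k * k * N ^ (k - 1)"
    by simp
  finally show ?thesis .
qed

lemma card_nondistinct_pattern_tuples_scaled:
  assumes "0 \<le> A" "0 \<le> e" "A * real (k * k) \<le> real N * e"
  shows "A * real (card (pattern_tuples N k y - distinct_pattern_tuples N k y)) \<le> real N ^ k * e"
proof (cases "k = 0")
  case True
  then show ?thesis
    using card_nondistinct_pattern_tuples[of N k y] assms(2) by simp
next
  case False
  have "A * real (card (pattern_tuples N k y - distinct_pattern_tuples N k y))
      \<le> A * (real (k * k) * real N ^ (k - 1))"
    using card_nondistinct_pattern_tuples[of N k y] assms(1)
    by (intro mult_left_mono) (simp_all flip: of_nat_mult of_nat_power)
  also have "\<dots> \<le> (real N * e) * real N ^ (k - 1)"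
    using assms(3) by (simp add: mult.assoc[symmetric] mult_right_mono)
  also have "\<dots> = real N ^ k * e"
    using False by (simp add: power_eq_if)
  finally show ?thesis .
qed

lemma rounded_weights_average_le:
  fixes \<mu> g f :: "'a \<Rightarrow> real" and c :: "'a \<Rightarrow> nat"
  assumes \<mu>: "\<And>y. 0 \<le> \<mu> y" "(\<Sum>y\<in>C. \<mu> y) = 1"
    and f_eq: "\<And>y. f y = M * \<mu> y - real (c y)" and f: "\<And>y. 0 \<le> f y" "\<And>y. f y \<le> 1"
    and g: "\<And>y. y \<in> C \<Longrightarrow> \<bar>g y\<bar> \<le> B" and "B \<ge> 0"
    and c_sum: "2 * B * real (card C) \<le> \<delta> * (\<Sum>y\<in>C. real (c y))"
  shows "(\<Sum>y\<in>C. real (c y) * g y) \<le> ((\<Sum>y\<in>C. \<mu> y * g y) + \<delta>) * (\<Sum>y\<in>C. real (c y))"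
proof -
  define G where "G = (\<Sum>y\<in>C. \<mu> y * g y)"
  have "\<bar>G\<bar> \<le> (\<Sum>y\<in>C. \<mu> y * B)"
    unfolding G_def using g \<mu>(1)
    by (intro order_trans[OF sum_abs] sum_mono) (simp add: abs_mult mult_left_mono)
  then have G: "\<bar>G\<bar> \<le> B"
    using \<mu>(2) by (simp flip: sum_distrib_right)
  have "(\<Sum>y\<in>C. real (c y) * (g y - G)) = (\<Sum>y\<in>C. M * (\<mu> y * g y) - G * M * \<mu> y + f y * (G - g y))"
    by (intro sum.cong) (simp_all add: f_eq algebra_simps)
  also have "\<dots> = (\<Sum>y\<in>C. f y * (G - g y))"
    using \<mu>(2) by (simp add: sum.distrib sum_subtractf G_def flip: sum_distrib_left)
  also have "\<dots> \<le> (\<Sum>y\<in>C. 2 * B)"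
  proof (rule sum_mono)
    fix y assume "y \<in> C"
    then have "G - g y \<le> 2 * B"
      using g[of y] G by (simp add: abs_le_iff)
    then have "f y * (G - g y) \<le> f y * (2 * B)"
      using f by (intro mult_left_mono) auto
    also have "\<dots> \<le> 2 * B"
      using f \<open>B \<ge> 0\<close> by (simp add: mult_left_le_one_le)
    finally show "f y * (G - g y) \<le> 2 * B" .
  qed
  also have "\<dots> = 2 * B * real (card C)"
    by simp
  also have "\<dots> \<le> \<delta> * (\<Sum>y\<in>C. real (c y))"
    by (rule c_sum)
  finally have "(\<Sum>y\<in>C. real (c y) * (g y - G)) \<le> \<delta> * (\<Sum>y\<in>C. real (c y))" .
  moreover have "(\<Sum>y\<in>C. real (c y) * (g y - G)) = (\<Sum>y\<in>C. real (c y) * g y) - G * (\<Sum>y\<in>C. real (c y))"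
    by (simp add: right_diff_distrib sum_subtractf sum_distrib_left mult.commute)
  ultimately show "(\<Sum>y\<in>C. real (c y) * g y) \<le> (G + \<delta>) * (\<Sum>y\<in>C. real (c y))"
    by (simp add: distrib_right)
qed

lemma nat_weights_approximating:
  fixes \<mu> :: "'a \<Rightarrow> real"
  assumes C: "finite C" and \<mu>: "\<And>y. 0 \<le> \<mu> y" "(\<Sum>y\<in>C. \<mu> y) = 1" and "\<delta> > 0" "B \<ge> 0"
  shows "\<exists>c :: 'a \<Rightarrow> nat. (\<forall>y. 0 < c y \<longrightarrow> 0 < \<mu> y) \<and> 0 < (\<Sum>y\<in>C. c y) \<and>
    (\<forall>g. (\<forall>y\<in>C. \<bar>g y\<bar> \<le> B) \<longrightarrow>
       (\<Sum>y\<in>C. real (c y) * g y) \<le> ((\<Sum>y\<in>C. \<mu> y * g y) + \<delta>) * (\<Sum>y\<in>C. real (c y)))"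
proof -
  define M where "M = real (card C) * (2 * B / \<delta> + 1) + 1"
  define c where "c y = nat \<lfloor>M * \<mu> y\<rfloor>" for y
  define f where "f y = M * \<mu> y - real (c y)" for y
  have "0 \<le> real (card C) * (2 * B / \<delta> + 1)"
    using \<open>\<delta> > 0\<close> \<open>B \<ge> 0\<close> by simp
  then have "M > 0"
    by (simp add: M_def)
  then have f: "0 \<le> f y" "f y \<le> 1" for y
    using \<mu>(1)[of y] by (simp_all add: f_def c_def) linarith+
  have pos: "0 < \<mu> y" if "0 < c y" for y
  proof (rule ccontr)
    assume "\<not> 0 < \<mu> y"
    then have "\<mu> y = 0"
      using \<mu>(1)[of y] by simp
    then show False
      using that by (simp add: c_def)
  qed
  have "(\<Sum>y\<in>C. real (c y)) = M - (\<Sum>y\<in>C. f y)"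
    using \<mu>(2) by (simp add: f_def sum_subtractf flip: sum_distrib_left)
  moreover have "(\<Sum>y\<in>C. f y) \<le> real (card C)"
    using sum_mono[of C f "\<lambda>_. 1"] f by simp
  ultimately have "\<delta> * (M - real (card C)) \<le> \<delta> * (\<Sum>y\<in>C. real (c y))"
    using \<open>\<delta> > 0\<close> by (intro mult_left_mono) auto
  moreover have "\<delta> * (M - real (card C)) = 2 * B * real (card C) + \<delta>"
    using \<open>\<delta> > 0\<close> by (simp add: M_def algebra_simps)
  ultimately have c_sum: "2 * B * real (card C) + \<delta> \<le> \<delta> * (\<Sum>y\<in>C. real (c y))"
    by simp
  moreover have "0 \<le> 2 * B * real (card C)"
    using \<open>B \<ge> 0\<close> by simp
  ultimately have "0 < \<delta> * (\<Sum>y\<in>C. real (c y))"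
    using \<open>\<delta> > 0\<close> by linarith
  then have sum_pos: "0 < (\<Sum>y\<in>C. c y)"
    using \<open>\<delta> > 0\<close> by (simp add: zero_less_mult_iff flip: of_nat_sum)
  have "2 * B * real (card C) \<le> \<delta> * (\<Sum>y\<in>C. real (c y))"
    using c_sum \<open>\<delta> > 0\<close> by linarith
  note approx = rounded_weights_average_le[OF \<mu> f_def f _ \<open>B \<ge> 0\<close> this]
  show ?thesis
    using pos sum_pos approx by blast
qed

lemma card_distinct_pattern_tuples:
  "real (card (distinct_pattern_tuples N k y))
     = real N ^ k - real (card (pattern_tuples N k y - distinct_pattern_tuples N k y))"
proof -
  have "card (distinct_pattern_tuples N k y) \<le> N ^ k"
    using card_mono[OF finite_pattern_tuples distinct_pattern_tuples_subset] card_pattern_tuples by metis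
  then show ?thesis
    using distinct_pattern_tuples_subset
    by (simp add: card_Diff_subset finite_distinct_pattern_tuples card_pattern_tuples of_nat_diff)
qed

lemma length_pattern_instance:
  "real (length (pattern_instance N k c)) = (\<Sum>y\<in>cube k.
     real (c y) * (real N ^ k - real (card (pattern_tuples N k y - distinct_pattern_tuples N k y))))"
  using sum_list_pattern_instance[where h = "\<lambda>_. 1"]
  by (simp add: sum_list_triv card_distinct_pattern_tuples)

lemma sum_distinct_pattern_tuples_le:
  assumes x: "x \<in> cube (2 * N)" and "N > 0" and y: "y \<in> cube k"
  shows "(\<Sum>a\<in>distinct_pattern_tuples N k y. Q (map (nth x) a))
       \<le> real N ^ k * noisy_expectation k Q y (down_rate N x) (up_rate N x)
         + abs_mass k Q * real (card (pattern_tuples N k y - distinct_pattern_tuples N k y))"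
proof -
  let ?R = "pattern_tuples N k y - distinct_pattern_tuples N k y"
  have "(\<Sum>a\<in>pattern_tuples N k y. Q (map (nth x) a))
      = (\<Sum>a\<in>distinct_pattern_tuples N k y. Q (map (nth x) a)) + (\<Sum>a\<in>?R. Q (map (nth x) a))"
    using distinct_pattern_tuples_subset finite_pattern_tuples by (metis add.commute sum.subset_diff)
  moreover have "\<bar>Q (map (nth x) a)\<bar> \<le> abs_mass k Q" if "a \<in> pattern_tuples N k y" for a
    using abs_le_abs_mass map_nth_in_cube[OF x pattern_tuples_bounded[OF that]] by blast
  then have "(\<Sum>a\<in>?R. \<bar>Q (map (nth x) a)\<bar>) \<le> (\<Sum>a\<in>?R. abs_mass k Q)"
    by (intro sum_mono) auto
  then have "\<bar>\<Sum>a\<in>?R. Q (map (nth x) a)\<bar> \<le> abs_mass k Q * real (card ?R)"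
    by (intro order_trans[OF sum_abs]) (simp add: mult.commute)
  ultimately show ?thesis
    using sum_pattern_tuples[OF x \<open>N > 0\<close> y, of Q] by linarith
qed

lemma pattern_instance_value_le:
  assumes \<mu>: "prob_on_cube k \<mu>" and x: "x \<in> cube (2 * N)" and "N > 0" and "\<epsilon> > 0"
    and approx: "\<forall>g. (\<forall>y\<in>cube k. \<bar>g y\<bar> \<le> abs_mass k Q) \<longrightarrow>
       (\<Sum>y\<in>cube k. real (c y) * g y) \<le> ((\<Sum>y\<in>cube k. \<mu> y * g y) + \<epsilon> / 2) * (\<Sum>y\<in>cube k. real (c y))"
    and N_large: "(2 * abs_mass k Q + \<epsilon>) * real (k * k) \<le> real N * (\<epsilon> / 2)"
  shows "(\<Sum>a\<leftarrow>pattern_instance N k c. Q (map (nth x) a))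
       \<le> (E_noisy k Q \<mu> (down_rate N x) (up_rate N x) + \<epsilon>) * real (length (pattern_instance N k c))"
proof -
  define p where "p = down_rate N x"
  define q where "q = up_rate N x"
  have pq: "p \<in> {0..1}" "q \<in> {0..1}"
    using rates_in_unit_interval[OF \<open>N > 0\<close>] by (simp_all add: p_def q_def)
  define Q0 where "Q0 = abs_mass k Q"
  define n where "n = real N ^ k"
  define g where "g y = noisy_expectation k Q y p q" for y
  define G where "G = E_noisy k Q \<mu> p q"
  define U where "U y = real (card (pattern_tuples N k y - distinct_pattern_tuples N k y))" for y
  define C where "C = (\<Sum>y\<in>cube k. real (c y))"
  define CU where "CU = (\<Sum>y\<in>cube k. real (c y) * U y)"
  have U_nonneg: "0 \<le> U y" for y
    by (simp add: U_def)
  have collisions: "(2 * Q0 + \<epsilon>) * U y \<le> n * (\<epsilon> / 2)" for y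
    using N_large abs_mass_nonneg \<open>\<epsilon> > 0\<close> unfolding U_def n_def Q0_def
    by (intro card_nondistinct_pattern_tuples_scaled) auto
  have "(\<Sum>a\<leftarrow>pattern_instance N k c. Q (map (nth x) a))
      = (\<Sum>y\<in>cube k. real (c y) * (\<Sum>a\<in>distinct_pattern_tuples N k y. Q (map (nth x) a)))"
    by (rule sum_list_pattern_instance)
  also have "\<dots> \<le> (\<Sum>y\<in>cube k. real (c y) * (n * g y + Q0 * U y))"
    using sum_distinct_pattern_tuples_le[OF x \<open>N > 0\<close>]
    by (intro sum_mono mult_left_mono) (simp_all add: n_def g_def Q0_def U_def p_def q_def)
  also have "\<dots> = n * (\<Sum>y\<in>cube k. real (c y) * g y) + Q0 * CU"
    by (simp add: CU_def sum.distrib sum_distrib_left algebra_simps)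
  finally have instance_sum: "(\<Sum>a\<leftarrow>pattern_instance N k c. Q (map (nth x) a))
      \<le> n * (\<Sum>y\<in>cube k. real (c y) * g y) + Q0 * CU" .
  have "real (length (pattern_instance N k c)) = (\<Sum>y\<in>cube k. real (c y) * (n - U y))"
    by (simp add: length_pattern_instance n_def U_def)
  also have "\<dots> = n * C - CU"
    by (simp add: C_def CU_def sum_distrib_left sum_subtractf algebra_simps)
  finally have instance_length: "real (length (pattern_instance N k c)) = n * C - CU" .
  have "(\<Sum>y\<in>cube k. real (c y) * g y) \<le> (G + \<epsilon> / 2) * C"
    unfolding C_def G_def g_def E_noisy_eq_sum_noisy_expectation
    by (rule approx[rule_format]) (simp add: abs_noisy_expectation_le[OF pq])
  then have rounding: "n * (\<Sum>y\<in>cube k. real (c y) * g y) \<le> n * ((G + \<epsilon> / 2) * C)"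
    by (simp add: n_def mult_left_mono)
  have "G \<le> Q0"
    using abs_E_noisy_le[OF \<mu> pq] by (simp add: G_def Q0_def abs_le_iff)
  then have G_le: "(G + \<epsilon> + Q0) * CU \<le> (2 * Q0 + \<epsilon>) * CU"
    using U_nonneg by (intro mult_right_mono) (auto simp: CU_def intro!: sum_nonneg)
  have "(2 * Q0 + \<epsilon>) * CU = (\<Sum>y\<in>cube k. real (c y) * ((2 * Q0 + \<epsilon>) * U y))"
    by (simp add: CU_def sum_distrib_left mult_ac)
  also have "\<dots> \<le> (\<Sum>y\<in>cube k. real (c y) * (n * (\<epsilon> / 2)))"
    using collisions by (intro sum_mono mult_left_mono) auto
  also have "\<dots> = n * (\<epsilon> / 2) * C"
    by (simp only: C_def flip: sum_distrib_right) (simp add: mult_ac)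
  finally have total_collisions: "(2 * Q0 + \<epsilon>) * CU \<le> n * (\<epsilon> / 2) * C" .
  have "(G + \<epsilon>) * (n * C - CU) = n * ((G + \<epsilon> / 2) * C) + n * (\<epsilon> / 2) * C - (G + \<epsilon> + Q0) * CU + Q0 * CU"
    by (simp add: algebra_simps)
  then show ?thesis
    using instance_sum rounding G_le total_collisions unfolding instance_length G_def p_def q_def by linarith
qed

lemma valid_pattern_instance:
  assumes "k \<le> N" "y \<in> cube k" "0 < c y"
  shows "valid_instance (2 * N) k (pattern_instance N k c)"
proof -
  have "distinct_pattern_tuples N k y \<subseteq> set (pattern_instance N k c)"
    using assms(2,3) by (auto simp: set_pattern_instance)
  then have "pattern_instance N k c \<noteq> []"
    using distinct_pattern_tuples_nonempty[OF assms(1)] by auto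
  moreover have "length a = k \<and> distinct a \<and> set a \<subseteq> {..<2 * N}" if a: "a \<in> set (pattern_instance N k c)" for a
  proof -
    obtain y' where "a \<in> pattern_tuples N k y'" "distinct a"
      using a unfolding set_pattern_instance distinct_pattern_tuples_def by blast
    then show ?thesis
      using pattern_tuples_bounded by blast
  qed
  ultimately show ?thesis
    by (simp add: valid_instance_def)
qed

lemma inst_opt_eq_1_if_satisfying_assignment:
  assumes I: "valid_instance n k I" and P_le_1: "\<forall>y\<in>cube k. P y \<le> 1"
    and x: "x \<in> cube n" and sat: "\<forall>a\<in>set I. P (map (nth x) a) = 1"
  shows "inst_opt P n I = 1"
proof (rule antisym)
  have len: "0 < real (length I)"
    using I by (simp add: valid_instance_def)
  show "inst_opt P n I \<le> 1"
  proof (rule inst_opt_le)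
    fix x' assume "x' \<in> cube n"
    then have "(\<Sum>a\<leftarrow>I. P (map (nth x') a)) \<le> (\<Sum>a\<leftarrow>I. 1)"
      using P_le_1 constraint_view_in_cube[OF I] by (intro sum_list_mono) blast
    then show "inst_val P I x' \<le> 1"
      using len by (simp add: inst_val_def sum_list_triv)
  qed
  have "(\<Sum>a\<leftarrow>I. P (map (nth x) a)) = (\<Sum>a\<leftarrow>I. 1)"
    using sat by (intro arg_cong[where f = sum_list] map_cong) auto
  then have "inst_val P I x = 1"
    using len by (simp add: inst_val_def sum_list_triv)
  then show "1 \<le> inst_opt P n I"
    using inst_val_le_inst_opt[OF x] by metis
qed

lemma planted_assignment_satisfies_pattern_instance:
  assumes "\<forall>y\<in>cube k. 0 < c y \<longrightarrow> P y = 1" "a \<in> set (pattern_instance N k c)"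
  shows "P (map (nth (planted_assignment N)) a) = 1"
proof -
  obtain y where "y \<in> cube k" "0 < c y" "a \<in> distinct_pattern_tuples N k y"
    using assms(2) unfolding set_pattern_instance by blast
  then show ?thesis
    using assms(1) planted_assignment_view distinct_pattern_tuples_subset by blast
qed

lemma inst_opt_pattern_instance_le:
  assumes \<mu>: "prob_on_cube k \<mu>" and "N > 0" and "\<epsilon> > 0"
    and I: "valid_instance (2 * N) k (pattern_instance N k c)"
    and approx: "\<forall>g. (\<forall>y\<in>cube k. \<bar>g y\<bar> \<le> abs_mass k Q) \<longrightarrow>
       (\<Sum>y\<in>cube k. real (c y) * g y) \<le> ((\<Sum>y\<in>cube k. \<mu> y * g y) + \<epsilon> / 2) * (\<Sum>y\<in>cube k. real (c y))"
    and N_large: "(2 * abs_mass k Q + \<epsilon>) * real (k * k) \<le> real N * (\<epsilon> / 2)"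
  shows "inst_opt Q (2 * N) (pattern_instance N k c) \<le> Opt_plus k Q \<mu> + \<epsilon>"
proof (rule inst_opt_le)
  fix x assume "x \<in> cube (2 * N)"
  from pattern_instance_value_le[OF \<mu> this \<open>0 < N\<close> \<open>\<epsilon> > 0\<close> approx N_large]
  have "inst_val Q (pattern_instance N k c) x \<le> E_noisy k Q \<mu> (down_rate N x) (up_rate N x) + \<epsilon>"
    using I by (simp add: inst_val_def valid_instance_def divide_le_eq)
  also have "\<dots> \<le> Opt_plus k Q \<mu> + \<epsilon>"
    using E_noisy_le_Opt_plus[OF \<mu> rates_in_unit_interval[OF \<open>0 < N\<close>], of Q] by simp
  finally show "inst_val Q (pattern_instance N k c) x \<le> Opt_plus k Q \<mu> + \<epsilon>" .
qed

lemma distribution_imp_pos_it_useless: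
  assumes P01: "\<forall>y\<in>cube k. P y \<in> {0, 1}" and \<mu>: "prob_on_cube k \<mu>"
    and supp: "\<forall>y\<in>cube k. \<mu> y > 0 \<longrightarrow> P y = 1" and opt: "Opt_plus k Q \<mu> = E_Q_plus k Q"
  shows "pos_it_useless k P Q"
  unfolding pos_it_useless_def
proof (intro allI impI)
  fix \<epsilon> :: real assume "\<epsilon> > 0"
  have \<mu>_nonneg: "\<And>y. 0 \<le> \<mu> y" and \<mu>_sum: "(\<Sum>y\<in>cube k. \<mu> y) = 1"
    using \<mu> by (simp_all add: prob_on_cube_def)
  have "\<epsilon> / 2 > 0"
    using \<open>\<epsilon> > 0\<close> by simp
  obtain c where c_pos: "\<forall>y. 0 < c y \<longrightarrow> 0 < \<mu> y" and "0 < (\<Sum>y\<in>cube k. c y)"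
    and approx: "\<forall>g. (\<forall>y\<in>cube k. \<bar>g y\<bar> \<le> abs_mass k Q) \<longrightarrow>
       (\<Sum>y\<in>cube k. real (c y) * g y) \<le> ((\<Sum>y\<in>cube k. \<mu> y * g y) + \<epsilon> / 2) * (\<Sum>y\<in>cube k. real (c y))"
    using nat_weights_approximating[OF finite_cube \<mu>_nonneg \<mu>_sum \<open>\<epsilon> / 2 > 0\<close> abs_mass_nonneg[of k Q]]
    by blast
  then obtain y0 where y0: "y0 \<in> cube k" "0 < c y0"
    by (metis gr0I sum.neutral less_irrefl)
  define N where "N = k + 1 + nat \<lceil>2 * (2 * abs_mass k Q + \<epsilon>) * real (k * k) / \<epsilon>\<rceil>"
  have "0 < N" "k \<le> N"
    by (simp_all add: N_def)
  have "2 * (2 * abs_mass k Q + \<epsilon>) * real (k * k) / \<epsilon> \<le> real N"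
    unfolding N_def by linarith
  then have "2 * ((2 * abs_mass k Q + \<epsilon>) * real (k * k)) \<le> 2 * (real N * (\<epsilon> / 2))"
    using \<open>\<epsilon> > 0\<close> by (simp add: divide_le_eq algebra_simps)
  then have N_large: "(2 * abs_mass k Q + \<epsilon>) * real (k * k) \<le> real N * (\<epsilon> / 2)"
    by linarith
  define I where "I = pattern_instance N k c"
  have I: "valid_instance (2 * N) k I"
    unfolding I_def using \<open>k \<le> N\<close> y0 by (rule valid_pattern_instance)
  have "\<forall>y\<in>cube k. 0 < c y \<longrightarrow> P y = 1"
    using c_pos supp by blast
  then have "inst_opt P (2 * N) I = 1"
    using P01 unfolding I_def
    by (intro inst_opt_eq_1_if_satisfying_assignment[OF I[unfolded I_def] _ planted_assignment_in_cube])
      (auto intro: planted_assignment_satisfies_pattern_instance)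
  moreover have "inst_opt Q (2 * N) I \<le> E_Q_plus k Q + \<epsilon>"
    using inst_opt_pattern_instance_le[OF \<mu> \<open>0 < N\<close> \<open>\<epsilon> > 0\<close> I[unfolded I_def] approx N_large] opt
    by (simp add: I_def)
  ultimately show "\<exists>n I. valid_instance n k I \<and> inst_opt P n I = 1 \<and> inst_opt Q n I \<le> E_Q_plus k Q + \<epsilon>"
    using I by blast
qed

theorem theorem6p2:
  fixes k :: nat and P Q :: "int list \<Rightarrow> real"
  assumes "\<forall>x\<in>cube k. P x \<in> {0, 1}"
  shows "pos_it_useless k P Q \<longleftrightarrow>
    (\<exists>\<mu>. prob_on_cube k \<mu> \<and> (\<forall>y\<in>cube k. \<mu> y > 0 \<longrightarrow> P y = 1) \<and>
         Opt_plus k Q \<mu> = E_Q_plus k Q)"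
  using pos_it_useless_imp_distribution[OF assms] distribution_imp_pos_it_useless[OF assms] by blast

end
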